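(* Let $f:\mathbb{R}^n\times\mathbb{R}^m\to\mathbb{R}$ be twice continuously differentiable, convex in $x$ and concave in $y$. For $\nu>0$ let $z^*(\nu)$ be the saddle point of $\min_x\max_y f_\nu(x,y)$, $f_\nu(x,y)=f(x,y)+\frac{\nu}{2}\|x\|^2-\frac{\nu}{2}\|y\|^2$, and suppose there exist $C,\delta_0>0$ and $\theta\in(0,1]$ with $\|z^*(\nu_1)-z^*(\nu_2)\|\le C|\nu_1-\nu_2|^\theta$ for all $0<\nu_1,\nu_2<\delta_0$. Then for any sequence $\{\nu_k\}$ of positive numbers with $\lim_{k\to\infty}\nu_k=0$, the sequence $\{z^*(\nu_k)\}$ has a unique limit point $z^*=\lim_{k\to\infty}z^*(\nu_k)$, and $z^*$ is a saddle point of $\min_{x}\max_{y}f(x,y)$. *)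

theory Defs
  imports "HOL-Analysis.Analysis"
begin

definition C2 :: "('a::real_normed_vector \<Rightarrow> real) \<Rightarrow> bool" where
  "C2 g \<longleftrightarrow> (\<exists>(Dg :: 'a \<Rightarrow> 'a \<Rightarrow>\<^sub>L real) (D2g :: 'a \<Rightarrow> 'a \<Rightarrow>\<^sub>L ('a \<Rightarrow>\<^sub>L real)).
      (\<forall>z. (g has_derivative blinfun_apply (Dg z)) (at z)) \<and>
      (\<forall>z. (Dg has_derivative blinfun_apply (D2g z)) (at z)) \<and>
      continuous_on UNIV D2g)"

definition saddle_point :: "('a \<Rightarrow> 'b \<Rightarrow> real) \<Rightarrow> 'a \<times> 'b \<Rightarrow> bool" where
  "saddle_point f z \<longleftrightarrow> (\<forall>x y. f (fst z) y \<le> f (fst z) (snd z) \<and> f (fst z) (snd z) \<le> f x (snd z))"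

definition reg :: "real \<Rightarrow> (real^'n \<Rightarrow> real^'m \<Rightarrow> real) \<Rightarrow> real^'n \<Rightarrow> real^'m \<Rightarrow> real" where
  "reg \<nu> f x y = f x y + \<nu> / 2 * (norm x)\<^sup>2 - \<nu> / 2 * (norm y)\<^sup>2"

end

theory Submission
  imports Defs
begin

text \<open>The Hoelder estimate makes \<open>zs\<close> uniformly continuous on \<open>]0, \<delta>0[\<close>, so \<open>zs\<close> maps
  a null sequence of regularisation parameters to a Cauchy, hence convergent, sequence. The
  saddle inequalities for \<open>reg \<nu>\<^sub>k f\<close> pass to the limit, because \<open>f\<close> is continuous and the
  regularisation terms tend to \<open>0\<close> along convergent arguments.\<close>

lemma C2_continuous_on: "C2 g \<Longrightarrow> continuous_on UNIV g"
  unfolding C2_def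
  by (metis continuous_at_imp_continuous_on has_derivative_continuous)

lemma uniformly_continuous_on_if_hoelder:
  fixes h :: "'a::metric_space \<Rightarrow> 'b::metric_space"
  assumes \<theta>: "0 < \<theta>"
    and hoelder: "\<And>a b. a \<in> S \<Longrightarrow> b \<in> S \<Longrightarrow> dist (h a) (h b) \<le> C * dist a b powr \<theta>"
  shows "uniformly_continuous_on S h"
  unfolding uniformly_continuous_on_def
proof (intro allI impI)
  fix e :: real assume e: "e > 0"
  define K where "K = max C 1"
  define d where "d = (e / K) powr (1 / \<theta>)"
  have K: "K > 0" "C \<le> K" unfolding K_def by auto
  have d: "d > 0" "d powr \<theta> = e / K"
    unfolding d_def using e K \<theta> by (auto simp: powr_powr)
  have "dist (h b) (h a) < e" if "a \<in> S" "b \<in> S" "dist b a < d" for a b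
  proof -
    have "dist (h b) (h a) \<le> K * dist b a powr \<theta>"
      using order_trans[OF hoelder[OF that(2,1)] mult_right_mono[OF K(2) powr_ge_zero]] .
    also have "\<dots> < K * d powr \<theta>"
      using that(3) K(1) \<theta> by (simp add: powr_less_mono2)
    also have "\<dots> = e" using d(2) K(1) by simp
    finally show ?thesis .
  qed
  then show "\<exists>d>0. \<forall>a\<in>S. \<forall>b\<in>S. dist b a < d \<longrightarrow> dist (h b) (h a) < e"
    using d(1) by blast
qed

lemma uniformly_continuous_on_convergent:
  fixes h :: "'a::metric_space \<Rightarrow> 'b::complete_space"
  assumes "uniformly_continuous_on S h" and "convergent X"
    and "eventually (\<lambda>n. X n \<in> S) sequentially"
  shows "convergent (\<lambda>n. h (X n))"
proof -
  obtain M where M: "\<And>n. n \<ge> M \<Longrightarrow> X n \<in> S"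
    using assms(3) unfolding eventually_sequentially by blast
  have "Cauchy (\<lambda>n. X (n + M))"
    using assms(2) by (simp add: convergent_Cauchy convergent_ignore_initial_segment)
  then have "Cauchy (\<lambda>n. h (X (n + M)))"
    using M by (intro uniformly_continuous_on_Cauchy[OF assms(1)]) auto
  then show ?thesis
    using convergent_ignore_initial_segment[of "\<lambda>n. h (X n)" M] Cauchy_convergent_iff by blast
qed

lemma saddle_point_limit:
  fixes F :: "nat \<Rightarrow> 'a::topological_space \<Rightarrow> 'b::topological_space \<Rightarrow> real"
  assumes saddle: "\<And>k. saddle_point (F k) (z k)"
    and z: "z \<longlonglongrightarrow> z0"
    and F: "\<And>a b a0 b0. a \<longlonglongrightarrow> a0 \<Longrightarrow> b \<longlonglongrightarrow> b0 \<Longrightarrow> (\<lambda>k. F k (a k) (b k)) \<longlonglongrightarrow> f a0 b0"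
  shows "saddle_point f z0"
  unfolding saddle_point_def
proof (intro allI conjI)
  fix x y
  have x: "(\<lambda>k. fst (z k)) \<longlonglongrightarrow> fst z0" and y: "(\<lambda>k. snd (z k)) \<longlonglongrightarrow> snd z0"
    using z by (auto intro: tendsto_fst tendsto_snd)
  have le: "F k (fst (z k)) y \<le> F k (fst (z k)) (snd (z k))"
    "F k (fst (z k)) (snd (z k)) \<le> F k x (snd (z k))" for k
    using saddle[of k] unfolding saddle_point_def by auto
  show "f (fst z0) y \<le> f (fst z0) (snd z0)"
    by (rule LIMSEQ_le[OF F[OF x tendsto_const] F[OF x y]]) (use le(1) in blast)
  show "f (fst z0) (snd z0) \<le> f x (snd z0)"
    by (rule LIMSEQ_le[OF F[OF x y] F[OF tendsto_const y]]) (use le(2) in blast)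
qed

lemma tendsto_reg:
  assumes f: "continuous_on UNIV (\<lambda>z. f (fst z) (snd z))"
    and "(\<nu> \<longlongrightarrow> 0) F" "(a \<longlongrightarrow> a0) F" "(b \<longlongrightarrow> b0) F"
  shows "((\<lambda>k. reg (\<nu> k) f (a k) (b k)) \<longlongrightarrow> f a0 b0) F"
proof -
  have "((\<lambda>k. f (a k) (b k)) \<longlongrightarrow> f a0 b0) F"
    using continuous_on_tendsto_compose[OF f tendsto_Pair[OF assms(3,4)]] by simp
  then have "((\<lambda>k. f (a k) (b k) + \<nu> k / 2 * (norm (a k))\<^sup>2 - \<nu> k / 2 * (norm (b k))\<^sup>2)
      \<longlongrightarrow> f a0 b0 + 0 / 2 * (norm a0)\<^sup>2 - 0 / 2 * (norm b0)\<^sup>2) F"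
    using assms(2-4) by (intro tendsto_intros) auto
  then show ?thesis by (simp add: reg_def)
qed

theorem lemma5p4:
  fixes f :: "real^'n \<Rightarrow> real^'m \<Rightarrow> real"
    and zs :: "real \<Rightarrow> (real^'n) \<times> (real^'m)"
    and C \<delta>0 \<theta> :: real
  assumes C2: "C2 (\<lambda>z. f (fst z) (snd z))"
    and cvx: "\<forall>y. convex_on UNIV (\<lambda>x. f x y)"
    and ccv: "\<forall>x. concave_on UNIV (\<lambda>y. f x y)"
    and zs_saddle: "\<forall>\<nu>>0. saddle_point (reg \<nu> f) (zs \<nu>)"
    and C_pos: "C > 0" and \<delta>0_pos: "\<delta>0 > 0" and \<theta>: "0 < \<theta>" "\<theta> \<le> 1"
    and hoelder: "\<forall>\<nu>1 \<nu>2. 0 < \<nu>1 \<and> \<nu>1 < \<delta>0 \<and> 0 < \<nu>2 \<and> \<nu>2 < \<delta>0 \<longrightarrow>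
                    norm (zs \<nu>1 - zs \<nu>2) \<le> C * \<bar>\<nu>1 - \<nu>2\<bar> powr \<theta>"
  shows "\<forall>\<nu> :: nat \<Rightarrow> real. (\<forall>k. \<nu> k > 0) \<and> \<nu> \<longlonglongrightarrow> 0 \<longrightarrow>
           (\<exists>z. (\<lambda>k. zs (\<nu> k)) \<longlonglongrightarrow> z \<and> saddle_point f z)"
proof (intro allI impI, elim conjE)
  fix \<nu> :: "nat \<Rightarrow> real"
  assume pos: "\<forall>k. \<nu> k > 0" and lim: "\<nu> \<longlonglongrightarrow> 0"
  have "uniformly_continuous_on {0<..<\<delta>0} zs"
  proof (rule uniformly_continuous_on_if_hoelder[OF \<theta>(1)])
    show "dist (zs a) (zs b) \<le> C * dist a b powr \<theta>" if "a \<in> {0<..<\<delta>0}" "b \<in> {0<..<\<delta>0}" for a b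
      using hoelder that by (simp add: dist_norm)
  qed
  moreover have "eventually (\<lambda>k. \<nu> k \<in> {0<..<\<delta>0}) sequentially"
    using order_tendstoD(2)[OF lim \<delta>0_pos] pos by simp
  ultimately have "convergent (\<lambda>k. zs (\<nu> k))"
    by (rule uniformly_continuous_on_convergent[OF _ convergentI[OF lim]])
  then obtain z where zlim: "(\<lambda>k. zs (\<nu> k)) \<longlonglongrightarrow> z"
    unfolding convergent_def by blast
  have "saddle_point f z"
  proof (rule saddle_point_limit[where F = "\<lambda>k. reg (\<nu> k) f"])
    show "saddle_point (reg (\<nu> k) f) (zs (\<nu> k))" for k
      using zs_saddle pos by blast
    show "(\<lambda>k. reg (\<nu> k) f (a k) (b k)) \<longlonglongrightarrow> f a0 b0"
      if "a \<longlonglongrightarrow> a0" "b \<longlonglongrightarrow> b0" for a :: "nat \<Rightarrow> real^'n" and b :: "nat \<Rightarrow> real^'m" and a0 b0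
      using tendsto_reg[OF C2_continuous_on[OF C2] lim that] .
  qed (fact zlim)
  with zlim show "\<exists>z. (\<lambda>k. zs (\<nu> k)) \<longlonglongrightarrow> z \<and> saddle_point f z" by blast
qed

end
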